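(* Let $n\ge 1$ and let $Y$ be a semistandard Young tableau on the alphabet $\mathcal{A}_n$ which is an $sp_{2n}$-highest weight tableau. Then for every $1\le i\le n$, every entry of $Y$ equal to $i$ lies in the $i$-th row, and every entry equal to $\bar i$ lies in a row strictly below the $i$-th row.
   Context: $\mathcal{A}_n=\{1<2<\dots<n<\bar n<\dots<\bar 2<\bar 1\}$. Young diagrams are in English convention (row 1 on top). Semistandard: entries weakly increase along rows and strictly increase down columns. The reading of $Y$ is the word $a_1\cdots a_N$ obtained by reading each column top to bottom and concatenating columns from rightmost to leftmost. Crystal $B_n$ on $\mathcal{A}_n$: for $1\le i<n$, $\tilde f_i(i)=i+1$, $\tilde f_i(\overline{i+1})=\bar i$; $\tilde f_n(n)=\bar n$; $\tilde f_i(b)=0$ otherwise; $\tilde e_i$ is the partial inverse. $\varepsilon_i(b)=\max\{k:\tilde e_i^k b\ne0\}$, $\varphi_i(b)=\max\{k:\tilde f_i^kb\neq 0\}$. Tensor rule: $\tilde e_i(b_1\otimes b_2)=\tilde e_i(b_1)\otimes b_2$ if $\varphi_i(b_1)\ge\varepsilon_i(b_2)$, else $b_1\otimes\tilde e_i(b_2)$; $\tilde f_i(b_1\otimes b_2)=\tilde f_i(b_1)\otimes b_2$ if $\varphi_i(b_1)>\varepsilon_i(b_2)$, else $b_1\otimes\tilde f_i(b_2)$; iterated as $a_1\otimes\cdots\otimes a_N=(a_1\otimes\cdots\otimes a_{N-1})\otimes a_N$. $Y$ is an $sp_{2n}$-highest weight tableau if $\tilde e_i(a_1\otimes\cdots\otimes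 a_N)=0$ in $B_n^{\otimes N}$ for all $1\le i\le n$. *)

theory Defs
  imports Main
begin

text \<open>Letters of the alphabet A_n: Unb i stands for i, Bar i stands for the barred letter.
  A letter is in A_n iff 1 <= i <= n.\<close>
datatype letter = Unb nat | Bar nat

definition in_alph :: "nat \<Rightarrow> letter \<Rightarrow> bool" where
  "in_alph n a = (case a of Unb i \<Rightarrow> 1 \<le> i \<and> i \<le> n | Bar i \<Rightarrow> 1 \<le> i \<and> i \<le> n)"

text \<open>Position in the total order 1 < 2 < ... < n < bar n < ... < bar 1.\<close>
definition rank :: "nat \<Rightarrow> letter \<Rightarrow> nat" where
  "rank n a = (case a of Unb i \<Rightarrow> i | Bar i \<Rightarrow> 2 * n + 1 - i)"

definition lt_letter :: "nat \<Rightarrow> letter \<Rightarrow> letter \<Rightarrow> bool" where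
  "lt_letter n a b = (rank n a < rank n b)"

definition le_letter :: "nat \<Rightarrow> letter \<Rightarrow> letter \<Rightarrow> bool" where
  "le_letter n a b = (rank n a \<le> rank n b)"

text \<open>Young tableaux as lists of rows (row 1 on top, English convention).\<close>
definition is_young_tableau :: "nat \<Rightarrow> letter list list \<Rightarrow> bool" where
  "is_young_tableau n Y =
     ((\<forall>r < length Y. Y ! r \<noteq> []) \<and>
      (\<forall>r s. r < s \<and> s < length Y \<longrightarrow> length (Y ! s) \<le> length (Y ! r)) \<and>
      (\<forall>r < length Y. \<forall>a \<in> set (Y ! r). in_alph n a))"

definition semistandard :: "nat \<Rightarrow> letter list list \<Rightarrow> bool" where
  "semistandard n Y =
     (is_young_tableau n Y \<and>
      (\<forall>r < length Y. \<forall>c. Suc c < length (Y ! r) \<longrightarrow> le_letter n (Y ! r ! c) (Y ! r ! Suc c)) \<and>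
      (\<forall>r c. Suc r < length Y \<and> c < length (Y ! Suc r) \<longrightarrow> lt_letter n (Y ! r ! c) (Y ! Suc r ! c)))"

definition ncols :: "letter list list \<Rightarrow> nat" where
  "ncols Y = (if Y = [] then 0 else length (hd Y))"

definition column :: "letter list list \<Rightarrow> nat \<Rightarrow> letter list" where
  "column Y c = [Y ! r ! c. r \<leftarrow> [0..<length Y], c < length (Y ! r)]"

definition reading :: "letter list list \<Rightarrow> letter list" where
  "reading Y = concat (map (column Y) (rev [0..<ncols Y]))"

definition f_l :: "nat \<Rightarrow> nat \<Rightarrow> letter \<Rightarrow> letter option" where
  "f_l n i a =
    (if 1 \<le> i \<and> i < n then
       (if a = Unb i then Some (Unb (i+1)) else if a = Bar (i+1) then Some (Bar i) else None)
     else if i = n then (if a = Unb n then Some (Bar n) else None)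
     else None)"

definition e_l :: "nat \<Rightarrow> nat \<Rightarrow> letter \<Rightarrow> letter option" where
  "e_l n i a =
    (if 1 \<le> i \<and> i < n then
       (if a = Unb (i+1) then Some (Unb i) else if a = Bar i then Some (Bar (i+1)) else None)
     else if i = n then (if a = Bar n then Some (Unb n) else None)
     else None)"

definition iter_opt :: "('a \<Rightarrow> 'a option) \<Rightarrow> nat \<Rightarrow> 'a \<Rightarrow> 'a option" where
  "iter_opt g k x = ((\<lambda>y. Option.bind y g) ^^ k) (Some x)"

definition maxit :: "('a \<Rightarrow> 'a option) \<Rightarrow> 'a \<Rightarrow> nat" where
  "maxit g x = (GREATEST k. iter_opt g k x \<noteq> None)"

definition eps_l :: "nat \<Rightarrow> nat \<Rightarrow> letter \<Rightarrow> nat" where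
  "eps_l n i a = maxit (e_l n i) a"

definition phi_l :: "nat \<Rightarrow> nat \<Rightarrow> letter \<Rightarrow> nat" where
  "phi_l n i a = maxit (f_l n i) a"

text \<open>Crystal operators on words a_1 ... a_N = (a_1 ... a_{N-1}) tensor a_N, for words of
  length N, defined by recursion on N via the tensor rule; epsilon and phi of the prefix
  are the maximal numbers of applications of e and f.\<close>
primrec ops :: "nat \<Rightarrow> nat \<Rightarrow>
    (nat \<Rightarrow> letter list \<Rightarrow> letter list option) \<times> (nat \<Rightarrow> letter list \<Rightarrow> letter list option)" where
  "ops n 0 = ((\<lambda>i w. None), (\<lambda>i w. None))"
| "ops n (Suc N) =
    (let eP = fst (ops n N); fP = snd (ops n N) in
     ((\<lambda>i w. if w = [] then None else
         (let u = butlast w; a = last w in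
          if maxit (fP i) u \<ge> eps_l n i a
          then map_option (\<lambda>u'. u' @ [a]) (eP i u)
          else map_option (\<lambda>a'. u @ [a']) (e_l n i a))),
      (\<lambda>i w. if w = [] then None else
         (let u = butlast w; a = last w in
          if maxit (fP i) u > eps_l n i a
          then map_option (\<lambda>u'. u' @ [a]) (fP i u)
          else map_option (\<lambda>a'. u @ [a']) (f_l n i a)))))"

definition e_word :: "nat \<Rightarrow> nat \<Rightarrow> letter list \<Rightarrow> letter list option" where
  "e_word n i w = fst (ops n (length w)) i w"

definition f_word :: "nat \<Rightarrow> nat \<Rightarrow> letter list \<Rightarrow> letter list option" where
  "f_word n i w = snd (ops n (length w)) i w"

definition sp_highest_weight :: "nat \<Rightarrow> letter list list \<Rightarrow> bool" where
  "sp_highest_weight n Y = (\<forall>i. 1 \<le> i \<and> i \<le> n \<longrightarrow> e_word n i (reading Y) = None)"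

end

theory Submission
  imports Defs
begin

text \<open>For a word annihilated by every \<open>e_i\<close>, each prefix \<open>p\<close> is annihilated too, and
  \<open>\<phi>_i(p)\<close> equals the weight \<open>wt_i(p) = x_i(p) - x_(i+1)(p)\<close> (\<open>wt_n(p) = x_n(p)\<close>), where \<open>x_j\<close>
  counts the letters \<open>j\<close> minus the letters \<open>bar j\<close>. The tensor rule then gives
  \<open>\<epsilon>_i(a) \<le> wt_i(p)\<close> for the letter \<open>a\<close> following \<open>p\<close>; since all weights of \<open>p\<close> are
  nonnegative, \<open>x_i(p) \<ge> wt_i(p)\<close>, so \<open>\<epsilon>_i(a) = 1\<close> forces a letter \<open>i\<close> into \<open>p\<close>. In the
  column reading of a tableau this means that every \<open>i+1\<close> and every \<open>bar i\<close> has an \<open>i\<close> to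
  its right or above it in its column. By induction on \<open>i\<close> that \<open>i\<close> lies in row \<open>i\<close>, and the
  monotonicity of rows and columns then forces \<open>i+1\<close> into row \<open>i+1\<close> and \<open>bar i\<close> strictly
  below row \<open>i\<close>.\<close>

lemma funpow_bind_None: "((\<lambda>y. Option.bind y (g :: 'a \<Rightarrow> 'a option)) ^^ k) None = None"
  by (induction k) auto

lemma iter_opt_0 [simp]: "iter_opt g 0 x = Some x"
  by (simp add: iter_opt_def)

lemma iter_opt_Suc: "iter_opt g (Suc k) x = (case g x of None \<Rightarrow> None | Some y \<Rightarrow> iter_opt g k y)"
  by (cases "g x") (simp_all add: iter_opt_def funpow_Suc_right funpow_bind_None del: funpow.simps)

lemma iter_opt_le_measure:
  assumes decreasing: "\<And>x y. g x = Some y \<Longrightarrow> (\<mu> y :: nat) < \<mu> x"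
    and "iter_opt g k x \<noteq> None"
  shows "k \<le> \<mu> x"
  using assms(2)
proof (induction k arbitrary: x)
  case 0
  then show ?case by simp
next
  case (Suc k)
  then obtain y where y: "g x = Some y" and "iter_opt g k y \<noteq> None"
    by (cases "g x") (auto simp: iter_opt_Suc)
  with Suc.IH have "k \<le> \<mu> y" by blast
  with decreasing[OF y] show ?case by simp
qed

lemma maxit_unfold:
  assumes decreasing: "\<And>x y. g x = Some y \<Longrightarrow> (\<mu> y :: nat) < \<mu> x"
  shows "maxit g x = (case g x of None \<Rightarrow> 0 | Some y \<Rightarrow> Suc (maxit g y))"
proof (cases "g x")
  case None
  have "(GREATEST k. iter_opt g k x \<noteq> None) = 0"
  proof (rule Greatest_equality)
    fix k
    assume "iter_opt g k x \<noteq> None"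
    then show "k \<le> 0" by (cases k) (auto simp: None iter_opt_Suc)
  qed simp
  then show ?thesis by (simp add: maxit_def None)
next
  case (Some y)
  have bounded: "\<And>k. iter_opt g k y \<noteq> None \<Longrightarrow> k \<le> \<mu> y"
    using iter_opt_le_measure[of g \<mu>, OF decreasing] by blast
  have defined: "iter_opt g (maxit g y) y \<noteq> None"
    unfolding maxit_def by (rule GreatestI_nat[of _ 0]) (use bounded in auto)
  have maximal: "\<And>k. iter_opt g k y \<noteq> None \<Longrightarrow> k \<le> maxit g y"
    unfolding maxit_def by (rule Greatest_le_nat) (use bounded in auto)
  have "(GREATEST k. iter_opt g k x \<noteq> None) = Suc (maxit g y)"
  proof (rule Greatest_equality)
    show "iter_opt g (Suc (maxit g y)) x \<noteq> None"
      using defined by (simp add: iter_opt_Suc Some)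
    fix k
    assume "iter_opt g k x \<noteq> None"
    then show "k \<le> Suc (maxit g y)"
      by (cases k) (auto simp: iter_opt_Suc Some intro: maximal)
  qed
  then show ?thesis by (simp add: maxit_def Some)
qed

lemma rank_e_l_less: "e_l n i a = Some b \<Longrightarrow> rank n b < rank n a"
  by (auto simp: e_l_def rank_def split: if_splits)

lemma corank_f_l_less: "f_l n i a = Some b \<Longrightarrow> 2 * n + 1 - rank n b < 2 * n + 1 - rank n a"
  by (auto simp: f_l_def rank_def split: if_splits)

lemma e_l_twice_None: "e_l n i a = Some b \<Longrightarrow> e_l n i b = None"
  by (auto simp: e_l_def split: if_splits)

lemma f_l_twice_None: "f_l n i a = Some b \<Longrightarrow> f_l n i b = None"
  by (auto simp: f_l_def split: if_splits)

lemma eps_l_eq: "eps_l n i a = (if e_l n i a = None then 0 else 1)"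
  unfolding eps_l_def
  by (auto simp: maxit_unfold[OF rank_e_l_less] e_l_twice_None split: option.splits)

lemma phi_l_eq: "phi_l n i a = (if f_l n i a = None then 0 else 1)"
  unfolding phi_l_def
  by (auto simp: maxit_unfold[OF corank_f_l_less] f_l_twice_None split: option.splits)

text \<open>\<^term>\<open>ops n N\<close> acts on words of length \<open>N\<close>, and the tensor rule computes \<open>\<phi>_i\<close> of a
  prefix \<open>u\<close> by iterating that same length-\<open>N\<close> operator: \<open>\<phi>_i(u) = maxit (f_tensor n i N) u\<close>.\<close>

definition e_tensor :: "nat \<Rightarrow> nat \<Rightarrow> nat \<Rightarrow> letter list \<Rightarrow> letter list option" where
  "e_tensor n i N = fst (ops n N) i"

definition f_tensor :: "nat \<Rightarrow> nat \<Rightarrow> nat \<Rightarrow> letter list \<Rightarrow> letter list option" where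
  "f_tensor n i N = snd (ops n N) i"

lemma e_word_eq_e_tensor: "e_word n i w = e_tensor n i (length w) w"
  by (simp add: e_word_def e_tensor_def)

lemma e_tensor_snoc:
  "e_tensor n i (Suc N) (u @ [a]) =
    (if eps_l n i a \<le> maxit (f_tensor n i N) u
     then map_option (\<lambda>u'. u' @ [a]) (e_tensor n i N u)
     else map_option (\<lambda>a'. u @ [a']) (e_l n i a))"
  by (simp add: e_tensor_def f_tensor_def Let_def)

lemma f_tensor_snoc:
  "f_tensor n i (Suc N) (u @ [a]) =
    (if eps_l n i a < maxit (f_tensor n i N) u
     then map_option (\<lambda>u'. u' @ [a]) (f_tensor n i N u)
     else map_option (\<lambda>a'. u @ [a']) (f_l n i a))"
  by (simp add: e_tensor_def f_tensor_def Let_def)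

lemma f_tensor_0 [simp]: "f_tensor n i 0 w = None"
  by (simp add: f_tensor_def)

lemma f_tensor_Nil [simp]: "f_tensor n i N [] = None"
  by (cases N) (simp_all add: f_tensor_def Let_def)

lemma f_tensor_decreasing:
  "f_tensor n i N w = Some w' \<Longrightarrow>
    (\<Sum>a\<leftarrow>w'. 2 * n + 1 - rank n a) < (\<Sum>a\<leftarrow>w. 2 * n + 1 - rank n a)"
proof (induction N arbitrary: w w')
  case 0
  then show ?case by simp
next
  case (Suc N)
  show ?case
  proof (cases w rule: rev_exhaust)
    case Nil
    with Suc.prems show ?thesis by simp
  next
    case (snoc u a)
    show ?thesis
    proof (cases "eps_l n i a < maxit (f_tensor n i N) u")
      case True
      with Suc.prems snoc obtain u' where "f_tensor n i N u = Some u'" "w' = u' @ [a]"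
        by (auto simp: f_tensor_snoc)
      with Suc.IH show ?thesis by (simp add: snoc)
    next
      case False
      with Suc.prems snoc obtain b where "f_l n i a = Some b" "w' = u @ [b]"
        by (auto simp: f_tensor_snoc)
      with corank_f_l_less[of n i a b] show ?thesis by (simp add: snoc)
    qed
  qed
qed

lemma maxit_f_tensor:
  "maxit (f_tensor n i N) w =
    (case f_tensor n i N w of None \<Rightarrow> 0 | Some w' \<Rightarrow> Suc (maxit (f_tensor n i N) w'))"
  by (rule maxit_unfold) (rule f_tensor_decreasing)

lemma maxit_f_tensor_snoc:
  "maxit (f_tensor n i N) v = eps_l n i a + d \<Longrightarrow>
    maxit (f_tensor n i (Suc N)) (v @ [a]) = d + phi_l n i a"
proof (induction d arbitrary: v)
  case 0
  show ?case
  proof (cases "f_l n i a")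
    case None
    with 0 have "f_tensor n i (Suc N) (v @ [a]) = None" by (simp add: f_tensor_snoc)
    with None show ?thesis by (simp add: maxit_f_tensor[of n i "Suc N"] phi_l_eq)
  next
    case (Some b)
    with 0 have step: "f_tensor n i (Suc N) (v @ [a]) = Some (v @ [b])"
      by (simp add: f_tensor_snoc)
    have "eps_l n i a = 0" "eps_l n i b = 1" "f_l n i b = None"
      using Some by (auto simp: eps_l_eq e_l_def f_l_def split: if_splits)
    with 0 have "f_tensor n i (Suc N) (v @ [b]) = None"
      by (simp add: f_tensor_snoc)
    with step Some show ?thesis by (simp add: maxit_f_tensor[of n i "Suc N"] phi_l_eq)
  qed
next
  case (Suc d)
  then obtain v' where v': "f_tensor n i N v = Some v'" "maxit (f_tensor n i N) v' = eps_l n i a + d"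
    by (cases "f_tensor n i N v") (auto simp: maxit_f_tensor[of n i N v])
  with Suc.prems have "f_tensor n i (Suc N) (v @ [a]) = Some (v' @ [a])"
    by (simp add: f_tensor_snoc)
  with Suc.IH[OF v'(2)] show ?case by (simp add: maxit_f_tensor[of n i "Suc N" "v @ [a]"])
qed

lemma e_tensor_snoc_None:
  "e_tensor n i (Suc N) (u @ [a]) = None \<Longrightarrow>
    eps_l n i a \<le> maxit (f_tensor n i N) u \<and> e_tensor n i N u = None"
  by (auto simp: e_tensor_snoc eps_l_eq split: if_splits)

lemma e_tensor_None_prefix:
  "e_tensor n i (length (w @ v)) (w @ v) = None \<Longrightarrow> e_tensor n i (length w) w = None"
proof (induction v rule: rev_induct)
  case Nil
  then show ?case by simp
next
  case (snoc x v)
  then show ?case using e_tensor_snoc_None[of n i "length (w @ v)" "w @ v" x] by simp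
qed

definition weight :: "nat \<Rightarrow> nat \<Rightarrow> letter list \<Rightarrow> int" where
  "weight n i w = (\<Sum>a\<leftarrow>w. int (phi_l n i a) - int (eps_l n i a))"

lemma maxit_f_tensor_eq_weight:
  "e_tensor n i (length w) w = None \<Longrightarrow> int (maxit (f_tensor n i (length w)) w) = weight n i w"
proof (induction w rule: rev_induct)
  case Nil
  then show ?case by (subst maxit_f_tensor) (simp add: weight_def)
next
  case (snoc a u)
  from snoc.prems e_tensor_snoc_None[of n i "length u" u a]
  have eps_le: "eps_l n i a \<le> maxit (f_tensor n i (length u)) u"
    and "e_tensor n i (length u) u = None" by auto
  with snoc.IH have "int (maxit (f_tensor n i (length u)) u) = weight n i u" by blast
  moreover have "maxit (f_tensor n i (Suc (length u))) (u @ [a]) =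
      (maxit (f_tensor n i (length u)) u - eps_l n i a) + phi_l n i a"
    by (rule maxit_f_tensor_snoc) (use eps_le in simp)
  ultimately show ?case using eps_le by (simp add: weight_def)
qed

lemma eps_l_le_weight_prefix:
  assumes "e_tensor n i (length (pre @ a # post)) (pre @ a # post) = None"
  shows "int (eps_l n i a) \<le> weight n i pre"
proof -
  have "e_tensor n i (Suc (length pre)) (pre @ [a]) = None"
    using e_tensor_None_prefix[of n i "pre @ [a]" post] assms by simp
  from e_tensor_snoc_None[OF this]
  have "eps_l n i a \<le> maxit (f_tensor n i (length pre)) pre"
    and "e_tensor n i (length pre) pre = None" by auto
  with maxit_f_tensor_eq_weight[of n i pre] show ?thesis by simp
qed

definition content :: "nat \<Rightarrow> letter list \<Rightarrow> int" where
  "content j w = int (count_list w (Unb j)) - int (count_list w (Bar j))"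

lemma weight_eq_content:
  "1 \<le> i \<Longrightarrow> i \<le> n \<Longrightarrow>
    weight n i w = (if i < n then content i w - content (Suc i) w else content n w)"
  by (induction w) (auto simp: weight_def content_def phi_l_eq eps_l_eq f_l_def e_l_def)

lemma weight_le_content:
  assumes nonneg: "\<And>l. 1 \<le> l \<Longrightarrow> l \<le> n \<Longrightarrow> 0 \<le> weight n l w"
    and "1 \<le> j" "j \<le> n"
  shows "weight n j w \<le> content j w"
  using \<open>j \<le> n\<close>
proof (induction j rule: inc_induct)
  case base
  with assms(2,3) show ?case by (simp add: weight_eq_content)
next
  case (step k)
  with \<open>1 \<le> j\<close> nonneg[of "Suc k"] show ?case by (simp add: weight_eq_content)
qed

lemma row_length_antimono:
  "is_young_tableau n Y \<Longrightarrow> r' \<le> r \<Longrightarrow> r < length Y \<Longrightarrow> length (Y ! r) \<le> length (Y ! r')"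
  unfolding is_young_tableau_def by (cases "r' = r") auto

lemma row_le_rank:
  assumes "semistandard n Y" "r < length Y" "c < length (Y ! r)"
  shows "r + 1 \<le> rank n (Y ! r ! c)"
  using assms(2,3)
proof (induction r)
  case 0
  with assms(1) have "in_alph n (Y ! 0 ! c)"
    unfolding semistandard_def is_young_tableau_def by auto
  then show ?case by (cases "Y ! 0 ! c") (auto simp: in_alph_def rank_def)
next
  case (Suc r)
  with assms(1) have "c < length (Y ! r)" "lt_letter n (Y ! r ! c) (Y ! Suc r ! c)"
    using row_length_antimono[of n Y r "Suc r"] unfolding semistandard_def by auto
  with Suc show ?case by (simp add: lt_letter_def)
qed

lemma rank_mono_cells:
  assumes ss: "semistandard n Y"
    and "r \<le> r'" "c \<le> c'" "r' < length Y" "c' < length (Y ! r')"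
  shows "rank n (Y ! r ! c) \<le> rank n (Y ! r' ! c')"
proof -
  have yt: "is_young_tableau n Y" using ss by (simp add: semistandard_def)
  have "c' < length (Y ! r)" using row_length_antimono[OF yt, of r r'] assms(2,4,5) by linarith
  have "rank n (Y ! r ! c) \<le> rank n (Y ! r ! c')"
    using \<open>c \<le> c'\<close>
  proof (induction c rule: inc_induct)
    case (step k)
    with ss \<open>c' < length (Y ! r)\<close> \<open>r \<le> r'\<close> \<open>r' < length Y\<close>
    have "le_letter n (Y ! r ! k) (Y ! r ! Suc k)"
      unfolding semistandard_def by auto
    with step show ?case by (simp add: le_letter_def)
  qed simp
  also have "rank n (Y ! r ! c') \<le> rank n (Y ! r' ! c')"
    using \<open>r \<le> r'\<close>
  proof (induction r rule: inc_induct)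
    case (step k)
    have "c' < length (Y ! Suc k)"
      using row_length_antimono[OF yt, of "Suc k" r'] assms(4,5) step by linarith
    with ss \<open>r' < length Y\<close> step have "lt_letter n (Y ! k ! c') (Y ! Suc k ! c')"
      unfolding semistandard_def by auto
    with step show ?case by (simp add: lt_letter_def)
  qed simp
  finally show ?thesis .
qed

definition read_before :: "nat \<Rightarrow> nat \<Rightarrow> nat \<Rightarrow> nat \<Rightarrow> bool" where
  "read_before r' c' r c \<longleftrightarrow> c < c' \<or> (c' = c \<and> r' < r)"

lemma concat_map_if_singleton:
  "concat (map (\<lambda>x. if P x then [f x] else []) xs) = map f (filter P xs)"
  by (induction xs) auto

lemma reading_split:
  assumes yt: "is_young_tableau n Y" and r: "r < length Y" and c: "c < length (Y ! r)"
  obtains pre post where "reading Y = pre @ Y ! r ! c # post"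
    and "\<And>b. b \<in> set pre \<Longrightarrow>
      \<exists>r' c'. r' < length Y \<and> c' < length (Y ! r') \<and> b = Y ! r' ! c' \<and> read_before r' c' r c"
proof -
  let ?entries = "\<lambda>c rows. map (\<lambda>r. Y ! r ! c) (filter (\<lambda>r. c < length (Y ! r)) rows)"
  let ?col = "\<lambda>c. ?entries c [0..<length Y]"
  define W where "W = ncols Y"
  have "length (Y ! r) \<le> length (Y ! 0)"
    using row_length_antimono[OF yt, of 0 r] r by simp
  with c r have "c < W" by (auto simp: W_def ncols_def hd_conv_nth)
  then have cols: "[0..<W] = [0..<c] @ c # [Suc c..<W]"
    by (metis le_add1 le_add_same_cancel1 less_imp_add_positive upt_add_eq_append upt_conv_Cons)
  have rows: "[0..<length Y] = [0..<r] @ r # [Suc r..<length Y]"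
    using r by (metis le_add1 le_add_same_cancel1 less_imp_add_positive upt_add_eq_append upt_conv_Cons)
  define pre where "pre = concat (map ?col (rev [Suc c..<W])) @ ?entries c [0..<r]"
  define post where "post = ?entries c [Suc r..<length Y] @ concat (map ?col (rev [0..<c]))"
  have col_c: "?col c = ?entries c [0..<r] @ Y ! r ! c # ?entries c [Suc r..<length Y]"
    by (subst rows) (simp add: c)
  have "reading Y = concat (map ?col (rev [0..<W]))"
    by (simp add: reading_def W_def column_def[abs_def] concat_map_if_singleton)
  also have "\<dots> = pre @ Y ! r ! c # post"
    unfolding cols pre_def post_def by (simp add: col_c)
  finally have "reading Y = pre @ Y ! r ! c # post" .
  moreover have "\<exists>r' c'. r' < length Y \<and> c' < length (Y ! r') \<and> b = Y ! r' ! c' \<and> read_before r' c' r c"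
    if "b \<in> set pre" for b
  proof -
    from that consider
        (right) r' c' where "c < c'" "r' < length Y" "c' < length (Y ! r')" "b = Y ! r' ! c'"
      | (above) r' where "r' < r" "c < length (Y ! r')" "b = Y ! r' ! c"
      unfolding pre_def by (auto simp: Suc_le_eq)
    then show ?thesis
    proof cases
      case right
      then show ?thesis unfolding read_before_def by blast
    next
      case above
      with r show ?thesis unfolding read_before_def by (intro exI[of _ r'] exI[of _ c]) auto
    qed
  qed
  ultimately show ?thesis using that by blast
qed

lemma highest_weight_unbarred_read_before:
  assumes yt: "is_young_tableau n Y" and hw: "sp_highest_weight n Y"
    and r: "r < length Y" and c: "c < length (Y ! r)"
    and j: "1 \<le> j" "j \<le> n" and e_defined: "e_l n j (Y ! r ! c) \<noteq> None"
  shows "\<exists>r' c'. r' < length Y \<and> c' < length (Y ! r') \<and> Y ! r' ! c' = Unb j \<and> read_before r' c' r c"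
proof -
  obtain pre post where reading: "reading Y = pre @ Y ! r ! c # post"
    and earlier: "\<And>b. b \<in> set pre \<Longrightarrow>
      \<exists>r' c'. r' < length Y \<and> c' < length (Y ! r') \<and> b = Y ! r' ! c' \<and> read_before r' c' r c"
    using reading_split[OF yt r c] by blast
  have eps_le: "int (eps_l n l (Y ! r ! c)) \<le> weight n l pre" if "1 \<le> l" "l \<le> n" for l
    using hw that eps_l_le_weight_prefix[of n l pre "Y ! r ! c" post]
    by (simp add: sp_highest_weight_def e_word_eq_e_tensor reading)
  have "1 \<le> weight n j pre"
    using eps_le[OF j] e_defined by (simp add: eps_l_eq)
  also have "\<dots> \<le> content j pre"
    by (rule weight_le_content) (use eps_le order_trans[OF of_nat_0_le_iff] j in auto)
  finally have "Unb j \<in> set pre"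
    using count_notin[of "Unb j" pre] by (fastforce simp: content_def)
  with earlier show ?thesis by metis
qed

lemma unbarred_entry_in_row:
  assumes ss: "semistandard n Y" and hw: "sp_highest_weight n Y"
    and "r < length Y" "c < length (Y ! r)" "Y ! r ! c = Unb i" "i \<le> n"
  shows "r + 1 = i"
  using assms(3-6)
proof (induction i arbitrary: r c)
  case 0
  with row_le_rank[OF ss "0.prems"(1,2)] show ?case by (simp add: rank_def)
next
  case (Suc j)
  have yt: "is_young_tableau n Y" using ss by (simp add: semistandard_def)
  have "r + 1 \<le> Suc j"
    using row_le_rank[OF ss Suc.prems(1,2)] Suc.prems(3) by (simp add: rank_def)
  moreover have "\<not> r + 1 < Suc j"
  proof
    assume below: "r + 1 < Suc j"
    with Suc.prems have "e_l n j (Y ! r ! c) \<noteq> None" by (simp add: e_l_def)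
    with below Suc.prems obtain r' c' where
      cell: "r' < length Y" "c' < length (Y ! r')" "Y ! r' ! c' = Unb j" "read_before r' c' r c"
      using highest_weight_unbarred_read_before[OF yt hw Suc.prems(1,2), of j] by auto
    with Suc.IH Suc.prems(4) have "r' + 1 = j" by simp
    with below cell(4) have "r \<le> r'" "c \<le> c'" by (auto simp: read_before_def)
    from rank_mono_cells[OF ss this cell(1,2)] cell(3) Suc.prems(3) show False
      by (simp add: rank_def)
  qed
  ultimately show ?case by simp
qed

lemma barred_entry_below_row:
  assumes ss: "semistandard n Y" and hw: "sp_highest_weight n Y"
    and cell: "r < length Y" "c < length (Y ! r)" "Y ! r ! c = Bar i" and i: "1 \<le> i" "i \<le> n"
  shows "i < r + 1"
proof (rule ccontr)
  assume not_below: "\<not> i < r + 1"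
  have yt: "is_young_tableau n Y" using ss by (simp add: semistandard_def)
  have "e_l n i (Y ! r ! c) \<noteq> None" using cell i by (simp add: e_l_def)
  then obtain r' c' where
    cell': "r' < length Y" "c' < length (Y ! r')" "Y ! r' ! c' = Unb i" "read_before r' c' r c"
    using highest_weight_unbarred_read_before[OF yt hw cell(1,2) i] by auto
  with unbarred_entry_in_row[OF ss hw] i have "r' + 1 = i" by simp
  with not_below cell'(4) have "r \<le> r'" "c \<le> c'" by (auto simp: read_before_def)
  from rank_mono_cells[OF ss this cell'(1,2)] cell(3) cell'(3) i show False
    by (simp add: rank_def)
qed

theorem lemma2p6:
  fixes n :: nat and Y :: "letter list list"
  assumes "n \<ge> 1"
    and "semistandard n Y"
    and "sp_highest_weight n Y"
  shows "\<forall>i r c. 1 \<le> i \<and> i \<le> n \<and> r < length Y \<and> c < length (Y ! r) \<longrightarrow>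
            (Y ! r ! c = Unb i \<longrightarrow> r + 1 = i) \<and>
            (Y ! r ! c = Bar i \<longrightarrow> r + 1 > i)"
  using unbarred_entry_in_row[OF assms(2,3)] barred_entry_below_row[OF assms(2,3)] by blast

end
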